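(* Let $X$ be a nonempty set and let $g,g_1\in\Gamma(X)$ with $g$ of height at least $2$. Writing $u\approx v$ for $[u]=[v]$ in $FT^1(X)$: (i) $g\approx g^cg\approx gg^c\approx gg^lg\approx gg^rg$ and $g^rgg^l\approx g^rg^cg^l$; (ii) $[gg^r],[gg^l],[g^rg],[g^lg]$ are idempotents of $FT(X)$; (iii) $[g^lg]\,\mathcal L\,[g^rg]\,\mathcal L\,[g]\,\mathcal R\,[gg^r]\,\mathcal R\,[gg^l]$ in $FT(X)$; (iv) $[g]\in S([g^rg^c],[g^cg^l])$; (v) $g_1\approx\beta_1(g_1)$.
   Context: Let $1$ be a symbol not in $X$. Elements of height $\ge 2$ are triples $g=(g^l,g^c,g^r)$; $\Gamma_0(X)=\{1\}$, $\Gamma_1(X)=X$, each $x\in X$ identified with $(1,x,1)$ (so $x^l=x^r=1$, $x^c=x$); for $i\ge 2$, $\Gamma_i(X)$ is the set of triples $g\in\Gamma_{i-1}(X)\times\Gamma_{i-2}(X)\times\Gamma_{i-1}(X)$ with $g^l\neq g^r$ and $g^c\in\{(g^l)^l,(g^l)^r\}\cap\{(g^r)^l,(g^r)^r\}$; $\Gamma(X)=\bigcup_{i\ge0}\Gamma_i(X)$, height of $g$ = the $i$ with $g\in\Gamma_i(X)$. Let $\rho$ be the smallest congruence on $\Gamma(X)^+$ containing $(1g,g),(g1,g),(gg,g)$ for all $g\in\Gamma(X)$ and $(g^cg^lg,g)$, $(gg^rg^c,g)$, $(g^rg^cgg^cg^l,g^rg^cg^l)$ for all $g$ of height $\ge2$.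 $FT^1(X)=\Gamma(X)^+/\rho$, $[u]$ the class of $u$, $FT(X)=FT^1(X)\setminus\{[1]\}$. For a word $w=x_1\cdots x_m$ over $\{l,c,r\}$, $g^{w}=(\cdots((g^{x_1})^{x_2})\cdots)^{x_m}$, e.g. $g^{c^{k}l}=((g^c)^{\cdots c})^l$ with $k$ letters $c$; $g^{c^0}=g$. For $g\neq1$: if $g$ has height $2n$, $\beta_1(g)=g^{c^n}g^{c^{n-1}l}g^{c^{n-1}}\cdots g^cg^lgg^rg^c\cdots g^{c^{n-1}}g^{c^{n-1}r}g^{c^n}$; if $g$ has height $2n+1$, $\beta_1(g)=1\,g^{c^n}g^{c^{n-1}l}g^{c^{n-1}}\cdots g^cg^lgg^rg^c\cdots g^{c^{n-1}}g^{c^{n-1}r}g^{c^n}\,1$; and $\beta_1(1)=1$. $S(e,f)=\{h\in E: fh=h=he,\ ehf=ef\}$ is the sandwich set of idempotents $e,f$; $\mathcal L,\mathcal R$ are Green's relations. *)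

theory Defs
  imports Main
begin

(* Elements of Gamma(X): the symbol 1 (One), letters x (identified with (1,x,1)), and triples. *)
datatype 'a gam = One | Leaf 'a | Node "'a gam" "'a gam" "'a gam"

(* projections g^l, g^c, g^r; for a letter x = (1,x,1): x^l = x^r = 1, x^c = x.
   For 1 they are never used by the statement (set to 1). *)
fun lp :: "'a gam \<Rightarrow> 'a gam" where
  "lp One = One" | "lp (Leaf x) = One" | "lp (Node l c r) = l"
fun cp :: "'a gam \<Rightarrow> 'a gam" where
  "cp One = One" | "cp (Leaf x) = Leaf x" | "cp (Node l c r) = c"
fun rp :: "'a gam \<Rightarrow> 'a gam" where
  "rp One = One" | "rp (Leaf x) = One" | "rp (Node l c r) = r"

fun Gamma :: "'a set \<Rightarrow> nat \<Rightarrow> 'a gam set" where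
  "Gamma X 0 = {One}"
| "Gamma X (Suc 0) = Leaf ` X"
| "Gamma X (Suc (Suc i)) =
     {Node l c r | l c r. l \<in> Gamma X (Suc i) \<and> c \<in> Gamma X i \<and> r \<in> Gamma X (Suc i)
        \<and> l \<noteq> r \<and> c \<in> {lp l, rp l} \<inter> {lp r, rp r}}"

definition GammaAll :: "'a set \<Rightarrow> 'a gam set" where
  "GammaAll X = (\<Union>i. Gamma X i)"

definition height :: "'a set \<Rightarrow> 'a gam \<Rightarrow> nat" where
  "height X g = (THE i. g \<in> Gamma X i)"

definition words :: "'a set \<Rightarrow> 'a gam list set" where
  "words X = {u. u \<noteq> [] \<and> set u \<subseteq> GammaAll X}"

inductive rho :: "'a set \<Rightarrow> 'a gam list \<Rightarrow> 'a gam list \<Rightarrow> bool" for X where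
  gen1: "g \<in> GammaAll X \<Longrightarrow> rho X [One, g] [g]"
| gen2: "g \<in> GammaAll X \<Longrightarrow> rho X [g, One] [g]"
| gen3: "g \<in> GammaAll X \<Longrightarrow> rho X [g, g] [g]"
| gen4: "g \<in> Gamma X i \<Longrightarrow> 2 \<le> i \<Longrightarrow> rho X [cp g, lp g, g] [g]"
| gen5: "g \<in> Gamma X i \<Longrightarrow> 2 \<le> i \<Longrightarrow> rho X [g, rp g, cp g] [g]"
| gen6: "g \<in> Gamma X i \<Longrightarrow> 2 \<le> i \<Longrightarrow>
          rho X [rp g, cp g, g, cp g, lp g] [rp g, cp g, lp g]"
| refl: "u \<in> words X \<Longrightarrow> rho X u u"
| sym: "rho X u v \<Longrightarrow> rho X v u"
| trans: "rho X u v \<Longrightarrow> rho X v w \<Longrightarrow> rho X u w"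
| compat: "rho X u v \<Longrightarrow> set p \<subseteq> GammaAll X \<Longrightarrow> set q \<subseteq> GammaAll X \<Longrightarrow>
             rho X (p @ u @ q) (p @ v @ q)"

definition cls :: "'a set \<Rightarrow> 'a gam list \<Rightarrow> 'a gam list set" where
  "cls X u = {v. rho X u v}"

definition FT1 :: "'a set \<Rightarrow> 'a gam list set set" where
  "FT1 X = cls X ` words X"

definition FT :: "'a set \<Rightarrow> 'a gam list set set" where
  "FT X = FT1 X - {cls X [One]}"

definition clmul :: "'a set \<Rightarrow> 'a gam list set \<Rightarrow> 'a gam list set \<Rightarrow> 'a gam list set" where
  "clmul X A B = {w. \<exists>u\<in>A. \<exists>v\<in>B. rho X (u @ v) w}"

definition idem :: "'a set \<Rightarrow> 'a gam list set set" where
  "idem X = {e \<in> FT X. clmul X e e = e}"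

(* Green's relations L and R in the semigroup FT(X) (via FT(X)^1) *)
definition greenL :: "'a set \<Rightarrow> 'a gam list set \<Rightarrow> 'a gam list set \<Rightarrow> bool" where
  "greenL X a b \<longleftrightarrow> a \<in> FT X \<and> b \<in> FT X \<and>
     (a = b \<or> (\<exists>s\<in>FT X. clmul X s b = a)) \<and> (b = a \<or> (\<exists>t\<in>FT X. clmul X t a = b))"

definition greenR :: "'a set \<Rightarrow> 'a gam list set \<Rightarrow> 'a gam list set \<Rightarrow> bool" where
  "greenR X a b \<longleftrightarrow> a \<in> FT X \<and> b \<in> FT X \<and>
     (a = b \<or> (\<exists>s\<in>FT X. clmul X b s = a)) \<and> (b = a \<or> (\<exists>t\<in>FT X. clmul X a t = b))"

definition sandwich :: "'a set \<Rightarrow> 'a gam list set \<Rightarrow> 'a gam list set \<Rightarrow> 'a gam list set set" where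
  "sandwich X e f = {h \<in> idem X. clmul X f h = h \<and> h = clmul X h e \<and>
                      clmul X (clmul X e h) f = clmul X e f}"

definition cpow :: "'a gam \<Rightarrow> nat \<Rightarrow> 'a gam" where
  "cpow g k = (cp ^^ k) g"

definition beta1 :: "'a set \<Rightarrow> 'a gam \<Rightarrow> 'a gam list" where
  "beta1 X g =
    (let h = height X g; n = h div 2;
         core = concat (map (\<lambda>k. [cpow g (Suc k), lp (cpow g k)]) (rev [0..<n])) @ [g]
                @ concat (map (\<lambda>k. [rp (cpow g k), cpow g (Suc k)]) [0..<n])
     in if g = One then [One] else if even h then core else One # core @ [One])"

end

theory Submission
  imports Defs
begin

(* From g^c g^l g = g = g g^r g^c and g^c g^c = g^c one gets
   g^c g = g = g g^c, and the key identity g g^r g^c g^l g = g, read once as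
   (g g^r g^c) g^l g = g g^l g and once as g g^r (g^c g^l g) = g g^r g, yields
   g g^l g = g = g g^r g. Idempotency, the L- and R-relations and the sandwich property then
   follow by multiplying these identities out in FT(X); a class is not [1] once a
   representative has a letter other than 1, as rho preserves this.
   For (v), beta_1(g) is g wrapped in frames g^{c^(k+1)} g^{c^k l} ... g^{c^k r} g^{c^(k+1)}
   around a word beginning and ending with g^{c^k}, which has height at least 2, so each frame
   is absorbed by the first two identities for g^{c^k}; for odd height the padding ones vanish
   by 1u = u = u1. *)

declare rho.trans [trans]

lemma Gamma_in_GammaAll: "g \<in> Gamma X i \<Longrightarrow> g \<in> GammaAll X"
  unfolding GammaAll_def by blast

lemma One_in_GammaAll: "One \<in> GammaAll X"
  using Gamma_in_GammaAll[of One X 0] by simp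

lemma Gamma_components:
  assumes "g \<in> Gamma X i" "2 \<le> i"
  obtains k where "i = Suc (Suc k)"
    and "lp g \<in> Gamma X (Suc k)" "cp g \<in> Gamma X k" "rp g \<in> Gamma X (Suc k)"
proof -
  obtain k where k: "i = Suc (Suc k)" using assms(2) by (metis add_2_eq_Suc le_Suc_ex)
  with assms(1) show thesis by (auto intro: that)
qed

lemma Gamma_not_One: "g \<in> Gamma X i \<Longrightarrow> 0 < i \<Longrightarrow> g \<noteq> One"
  by (induction X i rule: Gamma.induct) auto

fun gam_rank :: "'a gam \<Rightarrow> nat" where
  "gam_rank One = 0"
| "gam_rank (Leaf x) = 1"
| "gam_rank (Node l c r) = Suc (gam_rank l)"

lemma Gamma_imp_rank: "g \<in> Gamma X i \<Longrightarrow> gam_rank g = i"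
  by (induction X i arbitrary: g rule: Gamma.induct) auto

lemma height_eq: "g \<in> Gamma X i \<Longrightarrow> height X g = i"
  unfolding height_def using Gamma_imp_rank by blast

lemma Gamma_components_in_GammaAll:
  assumes "g \<in> Gamma X i" "2 \<le> i"
  shows "lp g \<in> GammaAll X" "cp g \<in> GammaAll X" "rp g \<in> GammaAll X"
  using assms by (auto elim: Gamma_components intro: Gamma_in_GammaAll)

lemma Gamma_components_not_One:
  assumes "g \<in> Gamma X i" "2 \<le> i"
  shows "g \<noteq> One" "lp g \<noteq> One" "rp g \<noteq> One"
  using assms by (auto elim: Gamma_components dest: Gamma_not_One)

lemma rho_imp_words: "rho X u v \<Longrightarrow> u \<in> words X \<and> v \<in> words X"
  by (induction rule: rho.induct)
     (auto simp: words_def One_in_GammaAll Gamma_in_GammaAll Gamma_components_in_GammaAll)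

lemma rho_preserves_nonunit:
  "rho X u v \<Longrightarrow> (\<exists>x\<in>set u. x \<noteq> One) \<longleftrightarrow> (\<exists>x\<in>set v. x \<noteq> One)"
  by (induction rule: rho.induct) (auto dest: Gamma_components_not_One)

lemma cls_eq: "rho X u v \<Longrightarrow> cls X u = cls X v"
  unfolding cls_def using rho.sym rho.trans by blast

lemma clmul_cls:
  assumes "u \<in> words X" "v \<in> words X"
  shows "clmul X (cls X u) (cls X v) = cls X (u @ v)"
proof
  show "clmul X (cls X u) (cls X v) \<subseteq> cls X (u @ v)"
  proof
    fix w assume "w \<in> clmul X (cls X u) (cls X v)"
    then obtain u' v' where "rho X u u'" "rho X v v'" "rho X (u' @ v') w"
      unfolding clmul_def cls_def by auto
    moreover have "set u \<subseteq> GammaAll X" "set v' \<subseteq> GammaAll X"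
      using assms(1) rho_imp_words[OF \<open>rho X v v'\<close>] by (auto simp: words_def)
    ultimately have "rho X (u @ v) (u @ v')" "rho X (u @ v') (u' @ v')"
      using rho.compat[where p = "[]"] rho.compat[where q = "[]"] by auto
    with \<open>rho X (u' @ v') w\<close> show "w \<in> cls X (u @ v)"
      unfolding cls_def using rho.trans by blast
  qed
  show "cls X (u @ v) \<subseteq> clmul X (cls X u) (cls X v)"
    unfolding clmul_def cls_def using assms rho.refl by blast
qed

definition nonunit_words :: "'a set \<Rightarrow> 'a gam list set" where
  "nonunit_words X = {u \<in> words X. \<exists>x\<in>set u. x \<noteq> One}"

lemma nonunit_words_imp_words: "u \<in> nonunit_words X \<Longrightarrow> u \<in> words X"
  by (simp add: nonunit_words_def)

lemma cls_in_FT: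
  assumes "u \<in> nonunit_words X"
  shows "cls X u \<in> FT X"
proof -
  have "\<not> rho X [One] u"
    using assms rho_preserves_nonunit by (fastforce simp: nonunit_words_def)
  then have "cls X u \<noteq> cls X [One]"
    using assms rho.refl unfolding cls_def nonunit_words_def by blast
  then show ?thesis
    using assms unfolding FT_def FT1_def nonunit_words_def by blast
qed

lemma clmul_cls_eq:
  assumes "u \<in> words X" "v \<in> words X" "rho X (u @ v) w"
  shows "clmul X (cls X u) (cls X v) = cls X w"
  using clmul_cls[OF assms(1,2)] cls_eq[OF assms(3)] by simp

lemma cls_in_idem:
  assumes "u \<in> nonunit_words X" "rho X (u @ u) u"
  shows "cls X u \<in> idem X"
proof -
  have "u \<in> words X" using assms(1) by (rule nonunit_words_imp_words)
  then show ?thesis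
    unfolding idem_def using cls_in_FT[OF assms(1)] clmul_cls_eq[OF _ _ assms(2)] by simp
qed

lemma greenL_cls:
  assumes "u \<in> nonunit_words X" "v \<in> nonunit_words X" "s \<in> nonunit_words X" "t \<in> nonunit_words X"
    and "rho X (s @ v) u" "rho X (t @ u) v"
  shows "greenL X (cls X u) (cls X v)"
  unfolding greenL_def
  using assms cls_in_FT clmul_cls_eq[OF _ _ assms(5)] clmul_cls_eq[OF _ _ assms(6)]
    nonunit_words_imp_words by blast

lemma greenR_cls:
  assumes "u \<in> nonunit_words X" "v \<in> nonunit_words X" "s \<in> nonunit_words X" "t \<in> nonunit_words X"
    and "rho X (v @ s) u" "rho X (u @ t) v"
  shows "greenR X (cls X u) (cls X v)"
  unfolding greenR_def
  using assms cls_in_FT clmul_cls_eq[OF _ _ assms(5)] clmul_cls_eq[OF _ _ assms(6)]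
    nonunit_words_imp_words by blast

lemma cls_in_sandwich:
  assumes "h \<in> nonunit_words X" "e \<in> words X" "f \<in> words X"
    and "rho X (h @ h) h" "rho X (f @ h) h" "rho X (h @ e) h" "rho X (e @ h @ f) (e @ f)"
  shows "cls X h \<in> sandwich X (cls X e) (cls X f)"
proof -
  have h: "h \<in> words X" using assms(1) by (rule nonunit_words_imp_words)
  have eh: "e @ h \<in> words X" using assms(2) h by (auto simp: words_def)
  have "clmul X (clmul X (cls X e) (cls X h)) (cls X f) = cls X (e @ h @ f)"
    using clmul_cls[OF assms(2) h] clmul_cls[OF eh assms(3)] by simp
  also have "\<dots> = clmul X (cls X e) (cls X f)"
    using cls_eq[OF assms(7)] clmul_cls[OF assms(2,3)] by simp
  finally show ?thesis
    unfolding sandwich_def using cls_in_idem[OF assms(1,4)]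
      clmul_cls_eq[OF assms(3) h assms(5)] clmul_cls_eq[OF h assms(2) assms(6)] by simp
qed

locale high_element =
  fixes X :: "'a set" and g :: "'a gam" and i :: nat
  assumes g_in_Gamma: "g \<in> Gamma X i" and two_le_height: "2 \<le> i"
begin

abbreviation "l \<equiv> lp g"
abbreviation "c \<equiv> cp g"
abbreviation "r \<equiv> rp g"

lemma letters_in_GammaAll: "{g, l, c, r} \<subseteq> GammaAll X"
  using Gamma_in_GammaAll[OF g_in_Gamma] Gamma_components_in_GammaAll[OF g_in_Gamma two_le_height]
  by blast

lemma letter_words: "u \<noteq> [] \<Longrightarrow> set u \<subseteq> {g, l, c, r} \<Longrightarrow> u \<in> words X"
  using letters_in_GammaAll by (auto simp: words_def)

lemma letter_nonunit_words:
  assumes "set u \<subseteq> {g, l, c, r}" "g \<in> set u \<or> l \<in> set u \<or> r \<in> set u"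
  shows "u \<in> nonunit_words X"
proof -
  have "u \<noteq> []" "\<exists>x\<in>set u. x \<noteq> One"
    using assms(2) Gamma_components_not_One[OF g_in_Gamma two_le_height] by auto
  with assms(1) show ?thesis by (simp add: nonunit_words_def letter_words)
qed

lemma rho_in_context:
  assumes "rho X u v" "set p \<subseteq> {g, l, c, r}" "set q \<subseteq> {g, l, c, r}"
  shows "rho X (p @ u @ q) (p @ v @ q)"
  using rho.compat[OF assms(1)] assms(2,3) letters_in_GammaAll by blast

lemma rho_c_l_g: "rho X [c, l, g] [g]"
  using rho.gen4[OF g_in_Gamma two_le_height] .

lemma rho_g_r_c: "rho X [g, r, c] [g]"
  using rho.gen5[OF g_in_Gamma two_le_height] .

lemma rho_r_c_g_c_l: "rho X [r, c, g, c, l] [r, c, l]"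
  using rho.gen6[OF g_in_Gamma two_le_height] .

lemma rho_c_c: "rho X [c, c] [c]"
  using rho.gen3 letters_in_GammaAll by blast

lemma rho_g_g: "rho X [g, g] [g]"
  using rho.gen3 letters_in_GammaAll by blast

lemma rho_c_g: "rho X [c, g] [g]"
proof -
  have "rho X [c, g] [c, c, l, g]"
    using rho_in_context[OF rho.sym[OF rho_c_l_g], of "[c]" "[]"] by simp
  also have "rho X \<dots> [c, l, g]"
    using rho_in_context[OF rho_c_c, of "[]" "[l, g]"] by simp
  also note rho_c_l_g
  finally show ?thesis .
qed

lemma rho_g_c: "rho X [g, c] [g]"
proof -
  have "rho X [g, c] [g, r, c, c]"
    using rho_in_context[OF rho.sym[OF rho_g_r_c], of "[]" "[c]"] by simp
  also have "rho X \<dots> [g, r, c]"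
    using rho_in_context[OF rho_c_c, of "[g, r]" "[]"] by simp
  also note rho_g_r_c
  finally show ?thesis .
qed

lemma rho_g_r_c_l_g: "rho X [g, r, c, l, g] [g]"
proof -
  have "rho X [g, r, c, l, g] [g, r, c, c, l, g]"
    using rho_in_context[OF rho.sym[OF rho_c_c], of "[g, r]" "[l, g]"] by simp
  also have "rho X \<dots> [g, c, l, g]"
    using rho_in_context[OF rho_g_r_c, of "[]" "[c, l, g]"] by simp
  also have "rho X \<dots> [g, g]"
    using rho_in_context[OF rho_c_l_g, of "[g]" "[]"] by simp
  also note rho_g_g
  finally show ?thesis .
qed

lemma rho_g_l_g: "rho X [g, l, g] [g]"
proof -
  have "rho X [g, l, g] [g, r, c, l, g]"
    using rho_in_context[OF rho.sym[OF rho_g_r_c], of "[]" "[l, g]"] by simp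
  also note rho_g_r_c_l_g
  finally show ?thesis .
qed

lemma rho_g_r_g: "rho X [g, r, g] [g]"
proof -
  have "rho X [g, r, g] [g, r, c, l, g]"
    using rho_in_context[OF rho.sym[OF rho_c_l_g], of "[g, r]" "[]"] by simp
  also note rho_g_r_c_l_g
  finally show ?thesis .
qed

lemma rho_r_g_l: "rho X [r, g, l] [r, c, l]"
proof -
  have "rho X [r, g, l] [r, c, g, l]"
    using rho_in_context[OF rho.sym[OF rho_c_g], of "[r]" "[l]"] by simp
  also have "rho X \<dots> [r, c, g, c, l]"
    using rho_in_context[OF rho.sym[OF rho_g_c], of "[r, c]" "[l]"] by simp
  also note rho_r_c_g_c_l
  finally show ?thesis .
qed

lemma idempotents:
  "cls X [g, r] \<in> idem X" "cls X [g, l] \<in> idem X" "cls X [r, g] \<in> idem X" "cls X [l, g] \<in> idem X"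
proof -
  have "rho X [g, r, g, r] [g, r]" using rho_in_context[OF rho_g_r_g, of "[]" "[r]"] by simp
  then show "cls X [g, r] \<in> idem X" by (intro cls_in_idem) (simp_all add: letter_nonunit_words)
  have "rho X [g, l, g, l] [g, l]" using rho_in_context[OF rho_g_l_g, of "[]" "[l]"] by simp
  then show "cls X [g, l] \<in> idem X" by (intro cls_in_idem) (simp_all add: letter_nonunit_words)
  have "rho X [r, g, r, g] [r, g]" using rho_in_context[OF rho_g_r_g, of "[r]" "[]"] by simp
  then show "cls X [r, g] \<in> idem X" by (intro cls_in_idem) (simp_all add: letter_nonunit_words)
  have "rho X [l, g, l, g] [l, g]" using rho_in_context[OF rho_g_l_g, of "[l]" "[]"] by simp
  then show "cls X [l, g] \<in> idem X" by (intro cls_in_idem) (simp_all add: letter_nonunit_words)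
qed

lemma green_relations:
  "greenL X (cls X [l, g]) (cls X [r, g])" "greenL X (cls X [r, g]) (cls X [g])"
  "greenR X (cls X [g]) (cls X [g, r])" "greenR X (cls X [g, r]) (cls X [g, l])"
proof -
  have "rho X [l, g, r, g] [l, g]" "rho X [r, g, l, g] [r, g]"
    using rho_in_context[OF rho_g_r_g, of "[l]" "[]"] rho_in_context[OF rho_g_l_g, of "[r]" "[]"] by simp_all
  then show "greenL X (cls X [l, g]) (cls X [r, g])"
    by (intro greenL_cls[where s = "[l, g]" and t = "[r, g]"]) (simp_all add: letter_nonunit_words)
  have "rho X [r, g] [r, g]" by (rule rho.refl) (simp add: letter_words)
  then show "greenL X (cls X [r, g]) (cls X [g])"
    by (intro greenL_cls[where s = "[r]" and t = "[g]"]) (simp_all add: letter_nonunit_words rho_g_r_g)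
  show "greenR X (cls X [g]) (cls X [g, r])"
    by (intro greenR_cls[where s = "[g]" and t = "[r]"])
       (simp_all add: letter_nonunit_words rho_g_r_g rho.refl letter_words)
  have "rho X [g, l, g, r] [g, r]" "rho X [g, r, g, l] [g, l]"
    using rho_in_context[OF rho_g_l_g, of "[]" "[r]"] rho_in_context[OF rho_g_r_g, of "[]" "[l]"] by simp_all
  then show "greenR X (cls X [g, r]) (cls X [g, l])"
    by (intro greenR_cls[where s = "[g, r]" and t = "[g, l]"]) (simp_all add: letter_nonunit_words)
qed

lemma g_in_sandwich: "cls X [g] \<in> sandwich X (cls X [r, c]) (cls X [c, l])"
proof (rule cls_in_sandwich)
  have "rho X [r, c, g, c, l] [r, c, l]" by (rule rho_r_c_g_c_l)
  also have "rho X \<dots> [r, c, c, l]"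
    using rho_in_context[OF rho.sym[OF rho_c_c], of "[r]" "[l]"] by simp
  finally show "rho X ([r, c] @ [g] @ [c, l]) ([r, c] @ [c, l])" by simp
qed (simp_all add: letter_nonunit_words letter_words rho_g_g rho_c_l_g rho_g_r_c)

lemma strip_frame:
  assumes "u \<noteq> []" "set u \<subseteq> GammaAll X" "hd u = g" "last u = g"
  shows "rho X ([c, l] @ u @ [r, c]) u"
proof -
  obtain v where v: "u = g # v" using assms(1,3) by (cases u) auto
  obtain w where w: "u = w @ [g]" using assms(1,4) by (cases u rule: rev_cases) auto
  have "rho X ([c, l] @ u @ [r, c]) (u @ [r, c])"
    using rho.compat[OF rho_c_l_g, where p = "[]" and q = "v @ [r, c]"] assms(2) letters_in_GammaAll
    by (simp add: v)
  also have "rho X (u @ [r, c]) u"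
    using rho.compat[OF rho_g_r_c, where p = w and q = "[]"] assms(2) letters_in_GammaAll
    by (simp add: w)
  finally show ?thesis .
qed

end

lemma strip_One:
  assumes "u \<noteq> []" "set u \<subseteq> GammaAll X"
  shows "rho X (One # u @ [One]) u"
proof -
  obtain x v where v: "u = x # v" using assms(1) by (cases u) auto
  obtain w y where w: "u = w @ [y]" using assms(1) by (cases u rule: rev_cases) auto
  have "rho X (One # u @ [One]) (u @ [One])"
    using rho.compat[OF rho.gen1[where X = X and g = x], where p = "[]" and q = "v @ [One]"] assms(2)
    by (simp add: v One_in_GammaAll)
  also have "rho X (u @ [One]) u"
    using rho.compat[OF rho.gen2[where X = X and g = y], where p = w and q = "[]"] assms(2)
    by (simp add: w)
  finally show ?thesis .
qed

definition beta1_core :: "'a gam \<Rightarrow> nat \<Rightarrow> 'a gam list" where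
  "beta1_core g n = concat (map (\<lambda>k. [cpow g (Suc k), lp (cpow g k)]) (rev [0..<n])) @ [g]
     @ concat (map (\<lambda>k. [rp (cpow g k), cpow g (Suc k)]) [0..<n])"

lemma cpow_Suc: "cpow g (Suc n) = cp (cpow g n)"
  by (simp add: cpow_def)

lemma beta1_core_0: "beta1_core g 0 = [g]"
  by (simp add: beta1_core_def)

lemma beta1_core_Suc:
  "beta1_core g (Suc n) = [cpow g (Suc n), lp (cpow g n)] @ beta1_core g n @ [rp (cpow g n), cpow g (Suc n)]"
  by (simp add: beta1_core_def)

lemma hd_beta1_core: "hd (beta1_core g n) = cpow g n"
  by (cases n) (simp_all add: beta1_core_0 beta1_core_Suc cpow_def)

lemma last_beta1_core: "last (beta1_core g n) = cpow g n"
  by (cases n) (simp_all add: beta1_core_0 beta1_core_Suc cpow_def)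

lemma cpow_in_Gamma: "g \<in> Gamma X h \<Longrightarrow> 2 * n \<le> h \<Longrightarrow> cpow g n \<in> Gamma X (h - 2 * n)"
proof (induction n)
  case 0
  then show ?case by (simp add: cpow_def)
next
  case (Suc n)
  then have "cpow g n \<in> Gamma X (h - 2 * n)" "2 \<le> h - 2 * n" by auto
  then obtain k where "h - 2 * n = Suc (Suc k)" "cp (cpow g n) \<in> Gamma X k"
    by (rule Gamma_components)
  moreover from this(1) have "h - 2 * Suc n = k" by simp
  ultimately show ?case by (simp add: cpow_Suc)
qed

lemma beta1_core_rho:
  assumes "g \<in> Gamma X h" "2 * n \<le> h"
  shows "rho X (beta1_core g n) [g]"
  using assms(2)
proof (induction n)
  case 0
  show ?case
    unfolding beta1_core_0 using Gamma_in_GammaAll[OF assms(1)]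
    by (intro rho.refl) (simp add: words_def)
next
  case (Suc n)
  then have IH: "rho X (beta1_core g n) [g]" by simp
  interpret high_element X "cpow g n" "h - 2 * n"
    using Suc.prems cpow_in_Gamma[OF assms(1)] by unfold_locales simp_all
  have "rho X (beta1_core g (Suc n)) (beta1_core g n)"
    unfolding beta1_core_Suc cpow_Suc
    using rho_imp_words[OF IH]
    by (intro strip_frame) (auto simp: words_def hd_beta1_core last_beta1_core)
  also note IH
  finally show ?case .
qed

lemma rho_beta1:
  assumes "g \<in> GammaAll X"
  shows "rho X [g] (beta1 X g)"
proof -
  obtain h where h: "g \<in> Gamma X h" using assms unfolding GammaAll_def by blast
  define n where "n = h div 2"
  have core: "rho X (beta1_core g n) [g]" using beta1_core_rho[OF h] n_def by simp
  have beta1_eq: "beta1 X g = (if g = One then [One] else if even h then beta1_core g n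
      else One # beta1_core g n @ [One])"
    unfolding beta1_def beta1_core_def height_eq[OF h] n_def Let_def ..
  have "beta1_core g n \<in> words X" using rho_imp_words[OF core] by simp
  then have "rho X (One # beta1_core g n @ [One]) (beta1_core g n)"
    by (intro strip_One) (auto simp: words_def)
  also note core
  finally have "rho X [g] (One # beta1_core g n @ [One])" by (rule rho.sym)
  then show ?thesis
    unfolding beta1_eq using rho.sym[OF core] rho.refl[of "[One]"] One_in_GammaAll
    by (auto simp: words_def)
qed

theorem lemma3p1:
  fixes X :: "'a set" and g g1 :: "'a gam" and i :: nat
  assumes "X \<noteq> {}"
    and "g \<in> Gamma X i" and "2 \<le> i"
    and "g1 \<in> GammaAll X"
  shows
    "(rho X [g] [cp g, g] \<and> rho X [g] [g, cp g] \<and> rho X [g] [g, lp g, g]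
        \<and> rho X [g] [g, rp g, g] \<and> rho X [rp g, g, lp g] [rp g, cp g, lp g])
   \<and> (cls X [g, rp g] \<in> idem X \<and> cls X [g, lp g] \<in> idem X
        \<and> cls X [rp g, g] \<in> idem X \<and> cls X [lp g, g] \<in> idem X)
   \<and> (greenL X (cls X [lp g, g]) (cls X [rp g, g]) \<and> greenL X (cls X [rp g, g]) (cls X [g])
        \<and> greenR X (cls X [g]) (cls X [g, rp g]) \<and> greenR X (cls X [g, rp g]) (cls X [g, lp g]))
   \<and> cls X [g] \<in> sandwich X (cls X [rp g, cp g]) (cls X [cp g, lp g])
   \<and> rho X [g1] (beta1 X g1)"
proof -
  interpret high_element X g i
    using assms(2,3) by unfold_locales
  show ?thesis
    using rho_c_g rho_g_c rho_g_l_g rho_g_r_g rho_r_g_l idempotents green_relations g_in_sandwich rho_beta1[OF assms(4)]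
    by (simp add: rho.sym)
qed

end
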